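(* Let $g:\mathbb N\to\mathbb N$ be superlinear. For every $\alpha>1$, the class $\mathcal C_g$ is neither adaptively additively $\alpha$-robustly learnable nor adaptively subtractively $\alpha$-robustly learnable.
   Context: Let $\{B_i\}_{i\in\mathbb N}$ enumerate the finite subsets of $\mathbb N$; $p_{i,j,k}=(1-\frac1j)\delta_{(0,0)}+(\frac1j-\frac1k)U_{B_i\times\{2j+1\}}+\frac1k\delta_{(i,2j+2)}$ on $\mathbb N\times\mathbb N$; $\mathcal C_g=\{p_{i,j,g(j)}:i,j\in\mathbb N\}$. Superlinear: $g(j)/j\to\infty$. Samples are multisets; an adaptive adversary is a randomized map $V$ from finite multisets to finite multisets, additive if $S\subset V(S)$, subtractive if $V(S)\subset S$, with fixed constant budget $\eta=\mathrm{budget}(V)$: $|V(S)|$ depends only on $|S|$ and $\eta m-1<\sup_{|S|=m}\big||V(S)|-|S|\big|\le\eta m$. $\mathcal C$ is adaptively additively (resp. subtractively) $\alpha$-robustly learnable if there are a learner $A$ and $m(\epsilon,\delta)$ such that for all $p\in\mathcal C$, all adaptive additive (resp. subtractive) adversaries $V$, $\epsilon,\delta\in(0,1)$, $m\ge m(\epsilon,\delta)$, with probability $\ge1-\delta$ over $S\sim p^m$, $d_{\mathrm{TV}}(A(V(S)),p)\le\alpha\,\mathrm{budget}(V)+\epsilon$. *)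

theory Defs
  imports "HOL-Probability.Probability"
begin

type_synonym pt = "nat \<times> nat"

definition tv_dist :: "pt pmf \<Rightarrow> pt pmf \<Rightarrow> real" where
  "tv_dist P Q = (SUP A. \<bar>measure_pmf.prob P A - measure_pmf.prob Q A\<bar>)"

text \<open>The distribution p_{i,j,k} (well defined when j >= 1, k >= j, B i finite nonempty).\<close>
definition p_dist :: "(nat \<Rightarrow> nat set) \<Rightarrow> nat \<Rightarrow> nat \<Rightarrow> nat \<Rightarrow> pt pmf" where
  "p_dist B i j k = embed_pmf (\<lambda>x.
       (1 - 1 / real j) * indicator {(0, 0)} x
     + (1 / real j - 1 / real k) * indicator (B i \<times> {2 * j + 1}) x / real (card (B i))
     + (1 / real k) * indicator {(i, 2 * j + 2)} x)"

text \<open>The class C_g (only the indices for which p_{i,j,g(j)} is a genuine distribution).\<close>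
definition C_class :: "(nat \<Rightarrow> nat set) \<Rightarrow> (nat \<Rightarrow> nat) \<Rightarrow> pt pmf set" where
  "C_class B g = {p_dist B i j (g j) | i j. 1 \<le> j \<and> j \<le> g j \<and> B i \<noteq> {}}"

definition superlinear :: "(nat \<Rightarrow> nat) \<Rightarrow> bool" where
  "superlinear g \<longleftrightarrow> filterlim (\<lambda>j. real (g j) / real j) at_top sequentially"

fun sample_pmf :: "pt pmf \<Rightarrow> nat \<Rightarrow> pt multiset pmf" where
  "sample_pmf p 0 = return_pmf {#}"
| "sample_pmf p (Suc m) = bind_pmf p (\<lambda>x. map_pmf (add_mset x) (sample_pmf p m))"

type_synonym adversary = "pt multiset \<Rightarrow> pt multiset pmf"

definition additive_adv :: "adversary \<Rightarrow> bool" where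
  "additive_adv V \<longleftrightarrow> (\<forall>S. \<forall>T \<in> set_pmf (V S). S \<subseteq># T)"

definition subtractive_adv :: "adversary \<Rightarrow> bool" where
  "subtractive_adv V \<longleftrightarrow> (\<forall>S. \<forall>T \<in> set_pmf (V S). T \<subseteq># S)"

definition has_budget :: "adversary \<Rightarrow> real \<Rightarrow> bool" where
  "has_budget V \<eta> \<longleftrightarrow> (\<exists>f :: nat \<Rightarrow> nat.
     (\<forall>S. \<forall>T \<in> set_pmf (V S). size T = f (size S)) \<and>
     (\<forall>m. \<eta> * real m - 1 < \<bar>real (f m) - real m\<bar> \<and> \<bar>real (f m) - real m\<bar> \<le> \<eta> * real m))"

definition adaptive_robustly_learnable ::
    "(adversary \<Rightarrow> bool) \<Rightarrow> pt pmf set \<Rightarrow> real \<Rightarrow> bool" where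
  "adaptive_robustly_learnable Adv C \<alpha> \<longleftrightarrow>
     (\<exists>(A :: pt multiset \<Rightarrow> pt pmf) (m0 :: real \<Rightarrow> real \<Rightarrow> nat).
       \<forall>p \<in> C. \<forall>V \<eta>. Adv V \<longrightarrow> has_budget V \<eta> \<longrightarrow>
         (\<forall>\<epsilon> \<delta> m. 0 < \<epsilon> \<longrightarrow> \<epsilon> < 1 \<longrightarrow> 0 < \<delta> \<longrightarrow> \<delta> < 1 \<longrightarrow> m0 \<epsilon> \<delta> \<le> m \<longrightarrow>
           measure_pmf.prob (bind_pmf (sample_pmf p m) V)
             {T. tv_dist (A T) p \<le> \<alpha> * \<eta> + \<epsilon>} \<ge> 1 - \<delta>))"

abbreviation "adaptively_additively_robustly_learnable \<equiv> adaptive_robustly_learnable additive_adv"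
abbreviation "adaptively_subtractively_robustly_learnable \<equiv> adaptive_robustly_learnable subtractive_adv"

end

(* Fix j with k = g j >= 128 alpha j, let m be the sample size the learner needs for accuracy
   1/(32j) with confidence 7/8, and n = 2m + 1. For every transversal D of the pairs {2t, 2t+1}, t
   < n, the distribution p_{i,j,k} with B i = D belongs to C_g: it puts mass (1/j - 1/k)/n on each
   middle point (u, 2j+1), u in D, and mass 1/k on a rare point (i, 2j+2) that identifies D.
   Replacing every element of D whose middle point was not sampled by its partner gives a
   transversal twin D S; swapping the two rare points and the unsampled middle points maps the
   sample law of D to that of its twin, so with D uniform it is a measure-preserving involution of
   the joint law of (D, S). With budget 8/k an adversary can, with probability 7/8, corrupt S into
   a sample that is the same for (D, S) and its image: it adds copies of the twin's rare point, or
   deletes the rare point. But D and twin D S are (1/j - 1/k)/2 apart in total variation, more than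
   twice alpha * 8/k + 1/(32j), so the learner is accurate on at most half of the joint law,
   contradicting accuracy with probability 7/8. *)

theory Submission
  imports Defs
begin

lemma filter_mset_neq_plus_replicate:
  "filter_mset (\<lambda>z. z \<noteq> a) M + replicate_mset (count M a) a = M"
  by (metis add.commute filter_eq_replicate_mset multiset_partition)

lemma image_mset_involution:
  "(\<And>z. \<sigma> (\<sigma> z) = z) \<Longrightarrow> image_mset \<sigma> (image_mset \<sigma> M) = M"
  by (simp add: multiset.map_comp o_def)

lemma prob_diff_le_tv_dist:
  "\<bar>measure_pmf.prob q A - measure_pmf.prob p A\<bar> \<le> tv_dist q p"
  unfolding tv_dist_def
proof (rule cSUP_upper)
  have "\<bar>measure_pmf.prob q X - measure_pmf.prob p X\<bar> \<le> 1" for X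
    unfolding abs_le_iff using measure_pmf.prob_le_1[of q X] measure_pmf.prob_le_1[of p X]
      measure_nonneg[of q X] measure_nonneg[of p X] by linarith
  then show "bdd_above (range (\<lambda>X. \<bar>measure_pmf.prob q X - measure_pmf.prob p X\<bar>))"
    by (intro bdd_aboveI[of _ 1]) auto
qed simp

lemma sample_pmf_map_pmf:
  "sample_pmf (map_pmf f p) m = map_pmf (image_mset f) (sample_pmf p m)"
  by (induction m) (simp_all add: map_bind_pmf bind_map_pmf pmf.map_comp o_def)

lemma set_sample_pmf:
  "S \<in> set_pmf (sample_pmf p m) \<Longrightarrow> set_mset S \<subseteq> set_pmf p \<and> size S = m"
  by (induction m arbitrary: S) fastforce+

lemma nn_integral_count_sample_pmf:
  "(\<integral>\<^sup>+S. ennreal (real (count S a)) \<partial>sample_pmf p m) = ennreal (real m * pmf p a)"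
proof (induction m)
  case (Suc m)
  have "(\<integral>\<^sup>+S. ennreal (real (count S a)) \<partial>sample_pmf p (Suc m))
      = (\<integral>\<^sup>+x. \<integral>\<^sup>+S. ennreal (real (count S a)) + ennreal (indicator {a} x) \<partial>sample_pmf p m \<partial>p)"
    by (simp add: indicator_def ennreal_plus[symmetric] del: ennreal_plus)
       (intro nn_integral_cong, auto)
  also have "\<dots> = (\<integral>\<^sup>+x. ennreal (real m * pmf p a) + ennreal (indicator {a} x) \<partial>p)"
    by (simp add: nn_integral_add Suc)
  also have "\<dots> = ennreal (real (Suc m) * pmf p a)"
    by (simp add: nn_integral_add emeasure_pmf_single ennreal_indicator ennreal_plus[symmetric]
        algebra_simps del: ennreal_plus)
  finally show ?case .
qed simp

lemma prob_count_sample_pmf_gt: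
  "measure_pmf.prob (sample_pmf p m) {S. t < count S a} \<le> real m * pmf p a / (real t + 1)"
proof -
  let ?E = "{S. t < count S a}"
  have "ennreal (real t + 1) * emeasure (sample_pmf p m) ?E
        = (\<integral>\<^sup>+S. ennreal (real t + 1) * indicator ?E S \<partial>sample_pmf p m)"
    by (simp add: nn_integral_cmult)
  also have "\<dots> \<le> (\<integral>\<^sup>+S. ennreal (real (count S a)) \<partial>sample_pmf p m)"
    by (intro nn_integral_mono) (auto simp: indicator_def ennreal_plus[symmetric] simp del: ennreal_plus)
  finally have "ennreal ((real t + 1) * measure_pmf.prob (sample_pmf p m) ?E) \<le> ennreal (real m * pmf p a)"
    by (simp add: measure_pmf.emeasure_eq_measure ennreal_mult nn_integral_count_sample_pmf)
  then have "(real t + 1) * measure_pmf.prob (sample_pmf p m) ?E \<le> real m * pmf p a"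
    by (subst (asm) ennreal_le_iff) auto
  then show ?thesis
    by (simp add: pos_le_divide_eq add_pos_nonneg mult.commute)
qed

lemma prob_uniform_mixture:
  assumes "finite H" "H \<noteq> {}"
  shows "measure_pmf.prob (pmf_of_set H \<bind> (\<lambda>x. map_pmf (Pair x) (Q x))) X
       = (\<Sum>x\<in>H. measure_pmf.prob (Q x) (Pair x -` X)) / card H"
proof -
  have "ennreal (measure_pmf.prob (pmf_of_set H \<bind> (\<lambda>x. map_pmf (Pair x) (Q x))) X)
      = (\<Sum>x\<in>H. ennreal (measure_pmf.prob (Q x) (Pair x -` X))) / card H"
    using assms by (simp add: measure_pmf.emeasure_eq_measure[symmetric] nn_integral_pmf_of_set)
  also have "\<dots> = ennreal ((\<Sum>x\<in>H. measure_pmf.prob (Q x) (Pair x -` X)) / card H)"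
    using assms by (simp add: sum_ennreal ennreal_of_nat_eq_real_of_nat card_gt_0_iff divide_ennreal sum_nonneg)
  finally show ?thesis
    by (simp add: ennreal_inj sum_nonneg divide_nonneg_nonneg)
qed

lemma pmf_uniform_mixture:
  assumes "finite H" "x \<in> H"
  shows "pmf (pmf_of_set H \<bind> (\<lambda>x. map_pmf (Pair x) (Q x))) (x, y) = pmf (Q x) y / card H"
proof -
  have "pmf (map_pmf (Pair x') (Q x')) (x, y) = (if x' = x then pmf (Q x) y else 0)" for x'
    by (auto simp: pmf_map_inj' inj_on_def pmf_eq_0_set_pmf)
  then have "(\<Sum>x'\<in>H. pmf (map_pmf (Pair x') (Q x')) (x, y)) = pmf (Q x) y"
    using assms by simp
  moreover have "H \<noteq> {}"
    using assms by blast
  ultimately show ?thesis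
    using pmf_bind_pmf_of_set[of H "\<lambda>x. map_pmf (Pair x) (Q x)" "(x, y)"] assms(1) by simp
qed

lemma map_pmf_involution_eq:
  assumes "\<And>z. z \<in> set_pmf J \<Longrightarrow> \<psi> (\<psi> z) = z \<and> \<psi> z \<in> set_pmf J \<and> pmf J (\<psi> z) = pmf J z"
  shows "map_pmf \<psi> J = J"
proof (rule pmf_eqI)
  fix z
  have "pmf (map_pmf \<psi> J) z = measure_pmf.prob J (\<psi> -` {z} \<inter> set_pmf J)"
    by (simp add: pmf_map measure_Int_set_pmf)
  also have "\<dots> = pmf J z"
  proof (cases "z \<in> set_pmf J")
    case True
    then have "\<psi> -` {z} \<inter> set_pmf J = {\<psi> z}"
      using assms by (auto intro: sym)
    then show ?thesis
      using assms True by (simp add: measure_pmf_single)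
  next
    case False
    then have "\<psi> -` {z} \<inter> set_pmf J = {}"
      using assms by fastforce
    then show ?thesis
      using False by (simp add: pmf_eq_0_set_pmf)
  qed
  finally show "pmf (map_pmf \<psi> J) z = pmf J z" .
qed

lemma prob_le_half_if_swapped_out:
  assumes invariant: "map_pmf \<psi> J = J"
    and swapped_out: "\<And>z. z \<in> set_pmf J \<Longrightarrow> z \<in> E \<Longrightarrow> \<psi> z \<notin> E"
  shows "measure_pmf.prob J E \<le> 1 / 2"
proof -
  have "measure_pmf.prob J (\<psi> -` E) = measure_pmf.prob J E"
    by (metis invariant measure_map_pmf)
  moreover have "measure_pmf.prob J (\<psi> -` E) \<le> measure_pmf.prob J (\<psi> -` E - E)"
    using swapped_out by (subst (1 2) measure_Int_set_pmf[symmetric])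
      (intro measure_pmf.finite_measure_mono, auto)
  moreover have "measure_pmf.prob J E + measure_pmf.prob J (\<psi> -` E - E) \<le> 1"
    by (simp add: measure_pmf.finite_measure_Union'[symmetric])
  ultimately show ?thesis by linarith
qed

definition partner :: "nat \<Rightarrow> nat" where
  "partner u = (if even u then Suc u else u - 1)"

lemma partner_partner [simp]: "partner (partner u) = u"
  by (auto simp: partner_def)

lemma partner_less: "u < 2 * n \<Longrightarrow> partner u < 2 * n"
  by (auto simp: partner_def)

lemma partner_eq_iff [simp]: "partner u = partner v \<longleftrightarrow> u = v"
  by (metis partner_partner)

lemma div_2_eq_iff_partner: "u div 2 = v div 2 \<longleftrightarrow> v = u \<or> v = partner u"
  unfolding partner_def by presburger

definition transversals :: "nat \<Rightarrow> nat set set" where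
  "transversals n = {D. D \<subseteq> {..<2 * n} \<and> (\<forall>u<2 * n. u \<in> D \<longleftrightarrow> partner u \<notin> D)}"

lemma finite_transversals: "finite (transversals n)"
  by (rule finite_subset[of _ "Pow {..<2 * n}"]) (auto simp: transversals_def)

lemma transversals_nonempty: "transversals n \<noteq> {}"
proof -
  have "{u. u < 2 * n \<and> even u} \<in> transversals n"
    by (auto simp: transversals_def partner_def)
  then show ?thesis
    by blast
qed

lemma transversal_subset: "D \<in> transversals n \<Longrightarrow> D \<subseteq> {..<2 * n}"
  by (simp add: transversals_def)

lemma finite_transversal: "D \<in> transversals n \<Longrightarrow> finite D"
  by (meson finite_lessThan finite_subset transversal_subset)

lemma transversal_partner_iff:
  "D \<in> transversals n \<Longrightarrow> u < 2 * n \<Longrightarrow> partner u \<in> D \<longleftrightarrow> u \<notin> D"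
  by (auto simp: transversals_def)

lemma partner_notin_transversal: "D \<in> transversals n \<Longrightarrow> u \<in> D \<Longrightarrow> partner u \<notin> D"
  using transversal_partner_iff transversal_subset by blast

lemma card_transversal:
  assumes "D \<in> transversals n"
  shows "card D = n"
proof -
  have "bij_betw (\<lambda>u. u div 2) D {..<n}"
  proof (rule bij_betw_imageI)
    show "inj_on (\<lambda>u. u div 2) D"
    proof (rule inj_onI)
      fix u v assume "u \<in> D" "v \<in> D" "u div 2 = v div 2"
      then show "u = v"
        by (metis div_2_eq_iff_partner partner_notin_transversal[OF assms])
    qed
    show "(\<lambda>u. u div 2) ` D = {..<n}"
    proof (intro subset_antisym subsetI)
      fix t assume "t \<in> {..<n}"
      then have "2 * t \<in> D \<or> partner (2 * t) \<in> D"
        using transversal_partner_iff[OF assms, of "2 * t"] by auto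
      then show "t \<in> (\<lambda>u. u div 2) ` D"
        by (auto simp: partner_def image_iff intro: bexI[of _ "2 * t + 1"] bexI[of _ "2 * t"])
    qed (use transversal_subset[OF assms] in auto)
  qed
  then show ?thesis
    by (simp add: bij_betw_same_card)
qed

definition flip_outside :: "nat set \<Rightarrow> nat set \<Rightarrow> nat set" where
  "flip_outside D R = R \<union> partner ` (D - R)"

context
  fixes D R :: "nat set" and n :: nat
  assumes transversal: "D \<in> transversals n" and subset: "R \<subseteq> D"
begin

lemma flip_outside_transversal: "flip_outside D R \<in> transversals n"
  unfolding transversals_def flip_outside_def
proof (intro CollectI conjI allI impI)
  show "R \<union> partner ` (D - R) \<subseteq> {..<2 * n}"
    using transversal_subset[OF transversal] subset by (auto intro: partner_less)
  fix u assume "u < 2 * n"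
  then show "u \<in> R \<union> partner ` (D - R) \<longleftrightarrow> partner u \<notin> R \<union> partner ` (D - R)"
    using transversal_partner_iff[OF transversal] subset partner_less
    by (auto simp: image_iff) (metis DiffI partner_partner)+
qed

lemma subset_flip_outside: "R \<subseteq> flip_outside D R"
  by (simp add: flip_outside_def)

lemma diff_flip_outside: "D - flip_outside D R = D - R"
  using partner_notin_transversal[OF transversal] subset by (auto simp: flip_outside_def)

lemma flip_outside_flip_outside: "flip_outside (flip_outside D R) R = D"
proof -
  have "flip_outside D R - R = partner ` (D - R)"
    using partner_notin_transversal[OF transversal] subset by (auto simp: flip_outside_def)
  then show ?thesis
    using subset by (simp add: flip_outside_def[of "flip_outside D R"] image_image Un_absorb2)
      (auto simp: flip_outside_def)
qed

end

lemma pmf_p_dist: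
  assumes "1 \<le> j" "j \<le> k" "finite (B i)" "B i \<noteq> {}"
  shows "pmf (p_dist B i j k) x = (1 - 1 / real j) * indicator {(0, 0)} x
     + (1 / real j - 1 / real k) * indicator (B i \<times> {2 * j + 1}) x / real (card (B i))
     + (1 / real k) * indicator {(i, 2 * j + 2)} x"
proof -
  define f where "f x = (1 - 1 / real j) * indicator {(0, 0)} x
     + (1 / real j - 1 / real k) * indicator (B i \<times> {2 * j + 1}) x / real (card (B i))
     + (1 / real k) * indicator {(i, 2 * j + 2)} x" for x :: pt
  have "0 \<le> 1 - 1 / real j" "0 \<le> 1 / real j - 1 / real k"
    using assms by (simp_all add: frac_le)
  then have f_nonneg: "0 \<le> f x" for x
    unfolding f_def by (intro add_nonneg_nonneg mult_nonneg_nonneg divide_nonneg_nonneg) auto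
  define A where "A = insert (0, 0) (insert (i, 2 * j + 2) (B i \<times> {2 * j + 1}))"
  have "finite A"
    using assms by (simp add: A_def)
  have sum_indicator: "(\<Sum>x\<in>A. indicator S x) = real (card (A \<inter> S))" for S
    using \<open>finite A\<close> by (simp add: indicator_def sum.If_cases Int_def)
  have "(\<Sum>x\<in>A. f x) = (1 - 1 / real j) * card (A \<inter> {(0, 0)})
      + (1 / real j - 1 / real k) * card (A \<inter> B i \<times> {2 * j + 1}) / real (card (B i))
      + (1 / real k) * card (A \<inter> {(i, 2 * j + 2)})"
    unfolding f_def sum.distrib sum_divide_distrib[symmetric] sum_distrib_left[symmetric]
    by (simp only: sum_indicator)
  also have "\<dots> = 1"
    using assms by (simp add: A_def Int_absorb1 card_cartesian_product field_simps)
  finally have "(\<integral>\<^sup>+x. ennreal (f x) \<partial>count_space UNIV) = 1"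
    using f_nonneg assms
    by (subst nn_integral_count_space'[of A]) (auto simp: A_def f_def sum_ennreal)
  then have "pmf (embed_pmf f) x = f x"
    by (rule pmf_embed_pmf[OF f_nonneg])
  then show ?thesis
    by (simp add: p_dist_def f_def[abs_def])
qed

(* adv a b t S corrupts the sample S with budget t, where a is the rare point of the true
   distribution and b that of its twin.  Symmetry: as long as S contains at most t copies of a,
   the corrupted sample does not reveal which of a and b is the true rare point. *)
definition symmetric_adversary :: "(pt \<Rightarrow> pt \<Rightarrow> nat \<Rightarrow> pt multiset \<Rightarrow> pt multiset) \<Rightarrow> bool" where
  "symmetric_adversary adv \<longleftrightarrow> (\<forall>F a b c t. count F a = 0 \<longrightarrow> count F b = 0 \<longrightarrow> c \<le> t \<longrightarrow>
     adv a b t (F + replicate_mset c a) = adv b a t (F + replicate_mset c b))"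

lemma symmetric_adversaryD:
  "symmetric_adversary adv \<Longrightarrow> count F a = 0 \<Longrightarrow> count F b = 0 \<Longrightarrow> c \<le> t \<Longrightarrow>
    adv a b t (F + replicate_mset c a) = adv b a t (F + replicate_mset c b)"
  unfolding symmetric_adversary_def by blast

locale hard_family =
  fixes B :: "nat \<Rightarrow> nat set" and j k n :: nat
  assumes B_bij: "bij_betw B UNIV {A. finite A}"
    and j_pos: "1 \<le> j" and j_le_k: "j \<le> k" and n_pos: "1 \<le> n"
begin

definition mid :: "nat \<Rightarrow> pt" where
  "mid u = (u, 2 * j + 1)"

definition rare :: "nat set \<Rightarrow> pt" where
  "rare D = (inv B D, 2 * j + 2)"

definition hard_dist :: "nat set \<Rightarrow> pt pmf" where
  "hard_dist D = p_dist B (inv B D) j k"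

definition mid_mass :: real where
  "mid_mass = 1 / real j - 1 / real k"

lemma B_inv: "finite D \<Longrightarrow> B (inv B D) = D"
  using B_bij by (simp add: bij_betw_def f_inv_into_f)

lemma rare_eq_iff: "finite D \<Longrightarrow> finite D' \<Longrightarrow> rare D = rare D' \<longleftrightarrow> D = D'"
  by (metis B_inv rare_def prod.inject)

lemma mid_eq_iff [simp]: "mid u = mid v \<longleftrightarrow> u = v"
  by (simp add: mid_def)

lemma fst_mid [simp]: "fst (mid u) = u"
  by (simp add: mid_def)

lemma mid_in_mid_image [simp]: "mid u \<in> mid ` X \<longleftrightarrow> u \<in> X"
  by auto

lemma points_distinct [simp]:
  "rare D \<noteq> (0, 0)" "rare D \<noteq> mid u" "mid u \<noteq> rare D" "mid u \<noteq> (0, 0)" "(0, 0) \<noteq> mid u" "(0, 0) \<noteq> rare D"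
  by (simp_all add: rare_def mid_def)

lemma mid_mass_nonneg: "0 \<le> mid_mass"
  using j_pos j_le_k by (simp add: mid_mass_def frac_le)

lemma hard_dist_in_C_class:
  assumes "g j = k" "D \<in> transversals n"
  shows "hard_dist D \<in> C_class B g"
proof -
  have "B (inv B D) \<noteq> {}"
    using assms card_transversal finite_transversal n_pos B_inv by fastforce
  then show ?thesis
    unfolding C_class_def hard_dist_def using assms j_pos j_le_k by blast
qed

lemma pmf_hard_dist:
  assumes "D \<in> transversals n"
  shows "pmf (hard_dist D) z = (if z = (0, 0) then 1 - 1 / real j else 0)
     + (if z \<in> mid ` D then mid_mass / real n else 0)
     + (if z = rare D then 1 / real k else 0)"
proof -
  have D: "finite D" "D \<noteq> {}" "card D = n"
    using finite_transversal card_transversal assms n_pos by fastforce+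
  then show ?thesis
    unfolding hard_dist_def using j_pos j_le_k
    by (subst pmf_p_dist) (auto simp: B_inv indicator_def mid_mass_def mid_def rare_def)
qed

lemma pmf_hard_dist_rare:
  "D \<in> transversals n \<Longrightarrow> D' \<in> transversals n \<Longrightarrow>
     pmf (hard_dist D) (rare D') = (if D' = D then 1 / real k else 0)"
  by (auto simp: pmf_hard_dist rare_eq_iff finite_transversal)

lemma pmf_hard_dist_mid:
  "D \<in> transversals n \<Longrightarrow> pmf (hard_dist D) (mid u) = (if u \<in> D then mid_mass / real n else 0)"
  by (auto simp: pmf_hard_dist)

lemma set_hard_dist:
  "D \<in> transversals n \<Longrightarrow> z \<in> set_pmf (hard_dist D) \<Longrightarrow> z = (0, 0) \<or> z \<in> mid ` D \<or> z = rare D"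
  by (auto simp: set_pmf_eq pmf_hard_dist split: if_splits)

lemma prob_hard_dist_mid:
  assumes "D \<in> transversals n"
  shows "measure_pmf.prob (hard_dist D) (mid ` U) = mid_mass * card (D \<inter> U) / n"
proof -
  have "finite (D \<inter> U)"
    using finite_transversal[OF assms] by simp
  have "measure_pmf.prob (hard_dist D) (mid ` U) = measure_pmf.prob (hard_dist D) (mid ` (D \<inter> U))"
    by (intro measure_eq_AE) (auto simp: AE_measure_pmf_iff dest!: set_hard_dist[OF assms])
  also have "\<dots> = (\<Sum>u\<in>D \<inter> U. pmf (hard_dist D) (mid u))"
    using \<open>finite (D \<inter> U)\<close> by (simp add: measure_measure_pmf_finite sum.reindex inj_on_def)
  also have "\<dots> = mid_mass * card (D \<inter> U) / n"
    by (simp add: pmf_hard_dist_mid[OF assms])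
  finally show ?thesis .
qed

(* Markov's inequality for the rare point, of mass 1/k; it dictates the budget 8/k. *)
lemma prob_rare_count_gt_budget:
  assumes "D \<in> transversals n"
  shows "measure_pmf.prob (sample_pmf (hard_dist D) m) {S. nat \<lfloor>8 / real k * real m\<rfloor> < count S (rare D)}
    \<le> 1 / 8"
proof -
  let ?t = "nat \<lfloor>8 / real k * real m\<rfloor>"
  have "0 < real k"
    using j_pos j_le_k by simp
  moreover have "8 / real k * real m < real ?t + 1"
    using real_of_int_floor_add_one_gt[of "8 / real k * real m"] by simp
  ultimately have "real m * (1 / real k) / (real ?t + 1) \<le> 1 / 8"
    by (simp add: field_simps)
  moreover have "pmf (hard_dist D) (rare D) = 1 / real k"
    by (simp add: pmf_hard_dist_rare assms)
  then have "measure_pmf.prob (sample_pmf (hard_dist D) m) {S. ?t < count S (rare D)}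
      \<le> real m * (1 / real k) / (real ?t + 1)"
    using prob_count_sample_pmf_gt[of "hard_dist D" m ?t "rare D"] by (simp only:)
  ultimately show ?thesis
    by linarith
qed

definition swap :: "nat set \<Rightarrow> nat set \<Rightarrow> pt \<Rightarrow> pt" where
  "swap D D' z =
     (if z = rare D then rare D' else if z = rare D' then rare D
      else if z \<in> mid ` sym_diff D D' then mid (partner (fst z)) else z)"

lemma swap_commute: "swap D D' = swap D' D"
  by (intro ext) (auto simp: swap_def)

lemma partner_sym_diff:
  assumes "D \<in> transversals n" "D' \<in> transversals n" "u \<in> sym_diff D D'"
  shows "partner u \<in> D \<longleftrightarrow> u \<in> D'" "partner u \<in> D' \<longleftrightarrow> u \<in> D"
proof -
  have "u < 2 * n"
    using assms transversal_subset by blast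
  then show "partner u \<in> D \<longleftrightarrow> u \<in> D'" "partner u \<in> D' \<longleftrightarrow> u \<in> D"
    using assms transversal_partner_iff by blast+
qed

lemma swap_swap:
  assumes "D \<in> transversals n" "D' \<in> transversals n"
  shows "swap D D' (swap D D' z) = z"
proof -
  consider "z = rare D" | "z = rare D'" | u where "z = mid u" "u \<in> sym_diff D D'"
    | "z \<noteq> rare D" "z \<noteq> rare D'" "z \<notin> mid ` sym_diff D D'"
    by blast
  then show ?thesis
  proof cases
    case 3
    then have "partner u \<in> sym_diff D D'"
      using partner_sym_diff[OF assms] by blast
    with 3 show ?thesis
      by (auto simp: swap_def)
  qed (auto simp: swap_def)
qed

lemma inj_swap: "D \<in> transversals n \<Longrightarrow> D' \<in> transversals n \<Longrightarrow> inj (swap D D')"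
  by (metis injI swap_swap)

lemma pmf_hard_dist_swap:
  assumes "D \<in> transversals n" "D' \<in> transversals n"
  shows "pmf (hard_dist D) (swap D D' z) = pmf (hard_dist D') z"
proof -
  consider "z = rare D" | "z = rare D'" | u where "z = mid u" "u \<in> sym_diff D D'"
    | "z \<noteq> rare D" "z \<noteq> rare D'" "z \<notin> mid ` sym_diff D D'"
    by blast
  then show ?thesis
  proof cases
    case 3
    then show ?thesis
      using partner_sym_diff(1)[OF assms 3(2)]
      by (auto simp: swap_def pmf_hard_dist_mid assms)
  next
    case 4
    then have "z \<in> mid ` D \<longleftrightarrow> z \<in> mid ` D'"
      by blast
    with 4 show ?thesis
      by (simp add: swap_def pmf_hard_dist assms)
  qed (auto simp: swap_def pmf_hard_dist_rare assms)
qed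

lemma map_pmf_swap:
  assumes "D \<in> transversals n" "D' \<in> transversals n"
  shows "map_pmf (swap D D') (hard_dist D) = hard_dist D'"
proof (rule pmf_eqI)
  fix z
  have "pmf (map_pmf (swap D D') (hard_dist D)) z
      = pmf (map_pmf (swap D D') (hard_dist D)) (swap D D' (swap D D' z))"
    by (simp add: swap_swap assms)
  also have "\<dots> = pmf (hard_dist D') z"
    by (simp add: pmf_map_inj' inj_swap pmf_hard_dist_swap assms)
  finally show "pmf (map_pmf (swap D D') (hard_dist D)) z = pmf (hard_dist D') z" .
qed

definition seen :: "nat set \<Rightarrow> pt multiset \<Rightarrow> nat set" where
  "seen D S = {u \<in> D. mid u \<in># S}"

definition twin :: "nat set \<Rightarrow> pt multiset \<Rightarrow> nat set" where
  "twin D S = flip_outside D (seen D S)"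

definition twin_pair :: "nat set \<times> pt multiset \<Rightarrow> nat set \<times> pt multiset" where
  "twin_pair = (\<lambda>(D, S). (twin D S, image_mset (swap D (twin D S)) S))"

definition adversary_view ::
    "(pt \<Rightarrow> pt \<Rightarrow> nat \<Rightarrow> pt multiset \<Rightarrow> pt multiset) \<Rightarrow> (nat \<Rightarrow> nat) \<Rightarrow> nat set \<times> pt multiset \<Rightarrow> pt multiset"
  where "adversary_view adv b = (\<lambda>(D, S). adv (rare D) (rare (twin D S)) (b (size S)) S)"

lemma seen_subset: "seen D S \<subseteq> D"
  by (auto simp: seen_def)

lemma card_seen_le: "card (seen D S) \<le> size S"
proof -
  have "card (seen D S) = card (mid ` seen D S)"
    by (simp add: card_image inj_on_def)
  also have "\<dots> \<le> card (set_mset S)"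
    by (intro card_mono) (auto simp: seen_def)
  also have "\<dots> \<le> size S"
    using size_mset_mono[OF mset_set_set_mset_msubset, of S] by simp
  finally show ?thesis .
qed

lemma twin_transversal: "D \<in> transversals n \<Longrightarrow> twin D S \<in> transversals n"
  unfolding twin_def by (rule flip_outside_transversal[OF _ seen_subset])

lemma diff_twin: "D \<in> transversals n \<Longrightarrow> D - twin D S = D - seen D S"
  unfolding twin_def by (rule diff_flip_outside[OF _ seen_subset])

lemma tv_dist_twins_ge:
  assumes "D \<in> transversals n" "2 * size S < n"
  shows "mid_mass / 2 \<le> tv_dist q (hard_dist D) + tv_dist q (hard_dist (twin D S))"
proof -
  let ?E = "mid ` (D - seen D S)"
  have "finite (seen D S)"
    using finite_subset[OF seen_subset finite_transversal[OF assms(1)]] .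
  then have "card (D - seen D S) = n - card (seen D S)"
    using card_Diff_subset[OF _ seen_subset] card_transversal[OF assms(1)] by simp
  then have "n \<le> 2 * card (D - seen D S)"
    using card_seen_le[of D S] assms(2) by linarith
  then have "mid_mass * n \<le> mid_mass * (2 * card (D - seen D S))"
    by (intro mult_left_mono mid_mass_nonneg) simp
  then have "mid_mass / 2 \<le> measure_pmf.prob (hard_dist D) ?E"
    using assms by (simp add: prob_hard_dist_mid Int_absorb1 field_simps)
  moreover have "measure_pmf.prob (hard_dist (twin D S)) ?E = 0"
    using diff_twin[OF assms(1)]
    by (auto simp: prob_hard_dist_mid twin_transversal assms(1) intro!: card_eq_0_iff[THEN iffD2])
  ultimately show ?thesis
    using prob_diff_le_tv_dist[of q ?E "hard_dist D"]
      prob_diff_le_tv_dist[of q ?E "hard_dist (twin D S)"] by linarith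
qed

context
  fixes D :: "nat set" and S :: "pt multiset" and m :: nat
  assumes transversal: "D \<in> transversals n"
    and sample: "S \<in> set_pmf (sample_pmf (hard_dist D) m)"
begin

lemma sample_point_cases:
  "z \<in># S \<Longrightarrow> z = (0, 0) \<or> z \<in> mid ` seen D S \<or> z = rare D"
  using set_hard_dist[OF transversal] set_sample_pmf[OF sample] by (fastforce simp: seen_def)

lemma swap_twin_fixes:
  assumes "z \<in># S" "z \<noteq> rare D"
  shows "swap D (twin D S) z = z"
proof -
  have "seen D S \<subseteq> D \<inter> twin D S"
    unfolding twin_def using subset_flip_outside[OF transversal seen_subset] seen_subset by blast
  then show ?thesis
    using sample_point_cases[OF assms(1)] assms(2) by (auto simp: swap_def)
qed

lemma image_swap_twin:
  "image_mset (swap D (twin D S)) S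
     = filter_mset (\<lambda>z. z \<noteq> rare D) S + replicate_mset (count S (rare D)) (rare (twin D S))"
proof -
  let ?F = "filter_mset (\<lambda>z. z \<noteq> rare D) S"
  have "image_mset (swap D (twin D S)) ?F = image_mset id ?F"
    using swap_twin_fixes by (intro image_mset_cong) auto
  then have "image_mset (swap D (twin D S)) (?F + replicate_mset (count S (rare D)) (rare D))
      = ?F + replicate_mset (count S (rare D)) (rare (twin D S))"
    by (simp add: swap_def)
  then show ?thesis
    by (simp only: filter_mset_neq_plus_replicate)
qed

lemma count_rare_twin:
  "count (filter_mset (\<lambda>z. z \<noteq> rare D) S) (rare (twin D S)) = 0"
  using sample_point_cases[of "rare (twin D S)"] by (auto simp: count_eq_zero_iff)

lemma seen_twin_pair:
  "seen (twin D S) (image_mset (swap D (twin D S)) S) = seen D S"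
proof -
  have "seen D S \<subseteq> twin D S"
    unfolding twin_def by (rule subset_flip_outside[OF transversal seen_subset])
  moreover have "mid u \<in># image_mset (swap D (twin D S)) S \<longleftrightarrow> mid u \<in># S" for u
    by (simp add: image_swap_twin)
  moreover have "u \<in> seen D S" if "mid u \<in># S" for u
    using sample_point_cases[OF that] by auto
  ultimately show ?thesis
    by (auto simp: seen_def)
qed

lemma twin_pair_twin_pair: "twin_pair (twin_pair (D, S)) = (D, S)"
proof -
  let ?S' = "image_mset (swap D (twin D S)) S"
  have twin_twin: "twin (twin D S) ?S' = D"
    unfolding twin_def[of "twin D S"] seen_twin_pair
    unfolding twin_def by (rule flip_outside_flip_outside[OF transversal seen_subset])
  have "image_mset (swap D (twin D S)) ?S' = S"
    by (intro image_mset_involution swap_swap transversal twin_transversal)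
  then show ?thesis
    by (simp add: twin_pair_def twin_twin swap_commute)
qed

lemma adversary_view_twin_pair:
  assumes "symmetric_adversary adv" "count S (rare D) \<le> b (size S)"
  shows "adversary_view adv b (twin_pair (D, S)) = adversary_view adv b (D, S)"
proof -
  define F where "F = filter_mset (\<lambda>z. z \<noteq> rare D) S"
  define S' where "S' = image_mset (swap D (twin D S)) S"
  let ?c = "count S (rare D)" and ?t = "b (size S)"
  have S: "S = F + replicate_mset ?c (rare D)"
    by (simp add: F_def filter_mset_neq_plus_replicate)
  have S': "S' = F + replicate_mset ?c (rare (twin D S))"
    unfolding S'_def F_def by (rule image_swap_twin)
  have F: "count F (rare D) = 0" "count F (rare (twin D S)) = 0"
    using count_rare_twin by (simp_all add: F_def)
  have "twin_pair (D, S) = (twin D S, S')" "twin (twin D S) S' = D"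
    using twin_pair_twin_pair by (simp_all add: S'_def twin_pair_def)
  then have "adversary_view adv b (twin_pair (D, S))
      = adv (rare (twin D S)) (rare D) ?t (F + replicate_mset ?c (rare (twin D S)))"
    by (simp add: adversary_view_def S'[symmetric] S'_def)
  also have "\<dots> = adv (rare D) (rare (twin D S)) ?t (F + replicate_mset ?c (rare D))"
    by (rule symmetric_adversaryD[OF assms(1) F assms(2), symmetric])
  also have "\<dots> = adversary_view adv b (D, S)"
    by (simp add: adversary_view_def S[symmetric])
  finally show ?thesis .
qed

end

lemma sample_pmf_twin:
  "D \<in> transversals n \<Longrightarrow> sample_pmf (hard_dist (twin D S)) m
     = map_pmf (image_mset (swap D (twin D S))) (sample_pmf (hard_dist D) m)"
  by (metis map_pmf_swap sample_pmf_map_pmf twin_transversal)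

definition joint :: "nat \<Rightarrow> (nat set \<times> pt multiset) pmf" where
  "joint m = pmf_of_set (transversals n) \<bind> (\<lambda>D. map_pmf (Pair D) (sample_pmf (hard_dist D) m))"

lemma set_pmf_joint:
  "(D, S) \<in> set_pmf (joint m) \<longleftrightarrow> D \<in> transversals n \<and> S \<in> set_pmf (sample_pmf (hard_dist D) m)"
  by (auto simp: joint_def finite_transversals transversals_nonempty)

lemma pmf_joint:
  "D \<in> transversals n \<Longrightarrow> pmf (joint m) (D, S) = pmf (sample_pmf (hard_dist D) m) S / card (transversals n)"
  unfolding joint_def by (rule pmf_uniform_mixture[OF finite_transversals])

lemma map_pmf_twin_pair_joint: "map_pmf twin_pair (joint m) = joint m"
proof (rule map_pmf_involution_eq)
  fix z assume "z \<in> set_pmf (joint m)"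
  then obtain D S where z: "z = (D, S)" and D: "D \<in> transversals n"
    and S: "S \<in> set_pmf (sample_pmf (hard_dist D) m)"
    by (cases z) (auto simp: set_pmf_joint)
  let ?\<sigma> = "swap D (twin D S)"
  have "inj (image_mset ?\<sigma>)"
    by (metis injI image_mset_involution swap_swap D twin_transversal)
  then have "pmf (sample_pmf (hard_dist (twin D S)) m) (image_mset ?\<sigma> S) = pmf (sample_pmf (hard_dist D) m) S"
    by (simp add: sample_pmf_twin D pmf_map_inj')
  moreover have "image_mset ?\<sigma> S \<in> set_pmf (sample_pmf (hard_dist (twin D S)) m)"
    using S by (simp add: sample_pmf_twin D)
  moreover have "twin_pair z = (twin D S, image_mset ?\<sigma> S)"
    by (simp add: z twin_pair_def)
  ultimately show "twin_pair (twin_pair z) = z \<and> twin_pair z \<in> set_pmf (joint m)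
      \<and> pmf (joint m) (twin_pair z) = pmf (joint m) z"
    using twin_pair_twin_pair[OF D S] by (simp add: z set_pmf_joint pmf_joint D twin_transversal)
qed

lemma prob_joint:
  "measure_pmf.prob (joint m) X
     = (\<Sum>D\<in>transversals n. measure_pmf.prob (sample_pmf (hard_dist D) m) {S. (D, S) \<in> X})
       / card (transversals n)"
  unfolding joint_def
  by (subst prob_uniform_mixture[OF finite_transversals transversals_nonempty]) (simp add: vimage_def)

lemma no_learner_against_symmetric_adversary:
  fixes A :: "pt multiset \<Rightarrow> pt pmf"
  assumes "2 * m < n" and "\<theta> < mid_mass / 4" and "symmetric_adversary adv"
    and success: "\<And>D. D \<in> transversals n \<Longrightarrow> 7 / 8 \<le> measure_pmf.prob (sample_pmf (hard_dist D) m)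
      {S. tv_dist (A (adversary_view adv b (D, S))) (hard_dist D) \<le> \<theta>}"
    and rare_seldom: "\<And>D. D \<in> transversals n \<Longrightarrow>
      measure_pmf.prob (sample_pmf (hard_dist D) m) {S. b m < count S (rare D)} \<le> 1 / 8"
  shows False
proof -
  define v where "v = adversary_view adv b"
  define Good where "Good = {z. tv_dist (A (v z)) (hard_dist (fst z)) \<le> \<theta>}"
  define Bad where "Bad = {z. b m < count (snd z) (rare (fst z))}"
  have H: "0 < real (card (transversals n))"
    using finite_transversals transversals_nonempty by (simp add: card_gt_0_iff)
  have "7 / 8 \<le> measure_pmf.prob (joint m) Good"
    using sum_bounded_below[of "transversals n" "7 / 8", OF success] H
    by (simp add: prob_joint Good_def v_def field_simps)
  moreover have "measure_pmf.prob (joint m) Bad \<le> 1 / 8"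
    using sum_bounded_above[of "transversals n" _ "1 / 8", OF rare_seldom] H
    by (simp add: prob_joint Bad_def field_simps)
  moreover have "measure_pmf.prob (joint m) (Good - Bad) \<le> 1 / 2"
  proof (rule prob_le_half_if_swapped_out[OF map_pmf_twin_pair_joint])
    fix z assume z: "z \<in> set_pmf (joint m)" "z \<in> Good - Bad"
    then obtain D S where DS: "z = (D, S)" "D \<in> transversals n" "S \<in> set_pmf (sample_pmf (hard_dist D) m)"
      by (cases z) (auto simp: set_pmf_joint)
    have "size S = m"
      using set_sample_pmf[OF DS(3)] by simp
    then have "v (twin_pair z) = v z"
      using z adversary_view_twin_pair[OF DS(2,3) assms(3)] by (simp add: v_def DS(1) Bad_def)
    moreover have "2 * size S < n"
      using \<open>size S = m\<close> assms(1) by simp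
    ultimately have "tv_dist (A (v z)) (hard_dist D) \<le> \<theta> \<Longrightarrow> tv_dist (A (v (twin_pair z))) (hard_dist (twin D S)) > \<theta>"
      using tv_dist_twins_ge[OF DS(2), of S "A (v z)"] assms(2) by auto
    then show "twin_pair z \<notin> Good - Bad"
      using z by (auto simp: Good_def DS twin_pair_def)
  qed
  moreover have "measure_pmf.prob (joint m) Good
      \<le> measure_pmf.prob (joint m) (Good - Bad) + measure_pmf.prob (joint m) Bad"
    by (rule order_trans[OF measure_pmf.finite_measure_mono measure_Un_le]) auto
  ultimately show False
    by linarith
qed

end

lemma threshold_below_quarter_gap:
  assumes "1 \<le> j" "128 * \<alpha> * real j \<le> real k" "1 < \<alpha>"
  shows "\<alpha> * (8 / real k) + 1 / (32 * real j) < (1 / real j - 1 / real k) / 4"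
proof -
  have quarter_gap: "z + w < (x - y) / 4"
    if "y \<le> x / 128" "z \<le> x / 16" "w = x / 32" "0 < x" for x y z w :: real
    using that by (simp add: field_simps)
  have j: "0 < real j" and jk: "128 * real j \<le> 128 * \<alpha> * real j"
    using assms by simp_all
  have scale: "0 < 128 * \<alpha> * real j"
    using j assms by simp
  then have k: "0 < real k"
    using assms(2) by linarith
  show ?thesis
  proof (rule quarter_gap)
    have "1 / real k \<le> 1 / (128 * real j)"
      using order_trans[OF jk assms(2)] j k by (intro divide_left_mono) auto
    then show "1 / real k \<le> 1 / real j / 128"
      by simp
    have "8 * \<alpha> / real k \<le> 8 * \<alpha> / (128 * \<alpha> * real j)"
      using assms(2,3) mult_pos_pos[OF k scale] by (intro divide_left_mono) auto
    then show "\<alpha> * (8 / real k) \<le> 1 / real j / 16"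
      using assms by simp
  qed (use j in simp_all)
qed

lemma superlinear_scale:
  assumes "superlinear g" "1 < \<alpha>"
  obtains j where "1 \<le> j" "j \<le> g j" "8 \<le> g j"
    "\<alpha> * (8 / real (g j)) + 1 / (32 * real j) < (1 / real j - 1 / real (g j)) / 4"
proof -
  have "eventually (\<lambda>j. 128 * \<alpha> \<le> real (g j) / real j) sequentially"
    using assms(1) by (simp add: superlinear_def filterlim_at_top)
  then obtain N where N: "\<And>j. N \<le> j \<Longrightarrow> 128 * \<alpha> \<le> real (g j) / real j"
    by (auto simp: eventually_sequentially)
  define j where "j = Suc N"
  have "128 * \<alpha> \<le> real (g j) / real j"
    using N[of j] by (simp add: j_def)
  then have scale: "128 * \<alpha> * real j \<le> real (g j)"
    by (simp add: pos_le_divide_eq j_def)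
  moreover have "1 \<le> real j"
    by (simp add: j_def)
  moreover from this have "128 * real j \<le> 128 * \<alpha> * real j"
    using assms(2) by simp
  ultimately have "real j \<le> real (g j)" "8 \<le> real (g j)"
    by linarith+
  moreover have "1 \<le> j"
    by (simp add: j_def)
  ultimately show ?thesis
    using that threshold_below_quarter_gap[OF _ scale assms(2)] by simp
qed

lemma has_budget_return_pmf:
  fixes v :: "pt multiset \<Rightarrow> pt multiset"
  assumes "0 \<le> \<eta>" "\<And>S. size (v S) = f (size S)"
    and "\<And>s. \<bar>real (f s) - real s\<bar> = real (nat \<lfloor>\<eta> * real s\<rfloor>)"
  shows "has_budget (\<lambda>S. return_pmf (v S)) \<eta>"
  unfolding has_budget_def
proof (intro exI[of _ f] conjI allI ballI)
  fix s :: nat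
  have "\<bar>real (f s) - real s\<bar> = of_int \<lfloor>\<eta> * real s\<rfloor>"
    using assms(1,3) by simp
  moreover have "of_int \<lfloor>\<eta> * real s\<rfloor> \<le> \<eta> * real s" "\<eta> * real s < of_int \<lfloor>\<eta> * real s\<rfloor> + 1"
    by (rule of_int_floor_le, rule real_of_int_floor_add_one_gt)
  ultimately show "\<eta> * real s - 1 < \<bar>real (f s) - real s\<bar>" "\<bar>real (f s) - real s\<bar> \<le> \<eta> * real s"
    by linarith+
qed (use assms(2) in simp)

theorem not_adaptive_robustly_learnable:
  fixes adv :: "pt \<Rightarrow> pt \<Rightarrow> nat \<Rightarrow> pt multiset \<Rightarrow> pt multiset"
  assumes B_bij: "bij_betw B UNIV {A :: nat set. finite A}"
    and "superlinear g" and "1 < \<alpha>"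
    and admissible: "\<And>(\<eta> :: real) a h. 0 \<le> \<eta> \<Longrightarrow> \<eta> \<le> 1 \<Longrightarrow>
      Adv (\<lambda>S. return_pmf (adv a (h S) (nat \<lfloor>\<eta> * real (size S)\<rfloor>) S)) \<and>
      has_budget (\<lambda>S. return_pmf (adv a (h S) (nat \<lfloor>\<eta> * real (size S)\<rfloor>) S)) \<eta>"
    and "symmetric_adversary adv"
  shows "\<not> adaptive_robustly_learnable Adv (C_class B g) \<alpha>"
proof
  assume "adaptive_robustly_learnable Adv (C_class B g) \<alpha>"
  then obtain A :: "pt multiset \<Rightarrow> pt pmf" and m0 :: "real \<Rightarrow> real \<Rightarrow> nat" where learner:
    "\<And>p V \<eta> \<epsilon> \<delta> m. p \<in> C_class B g \<Longrightarrow> Adv V \<Longrightarrow> has_budget V \<eta> \<Longrightarrow>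
       0 < \<epsilon> \<Longrightarrow> \<epsilon> < 1 \<Longrightarrow> 0 < \<delta> \<Longrightarrow> \<delta> < 1 \<Longrightarrow> m0 \<epsilon> \<delta> \<le> m \<Longrightarrow>
       1 - \<delta> \<le> measure_pmf.prob (sample_pmf p m \<bind> V) {T. tv_dist (A T) p \<le> \<alpha> * \<eta> + \<epsilon>}"
    unfolding adaptive_robustly_learnable_def by blast
  obtain j where j: "1 \<le> j" "j \<le> g j" "8 \<le> g j"
    "\<alpha> * (8 / real (g j)) + 1 / (32 * real j) < (1 / real j - 1 / real (g j)) / 4"
    using superlinear_scale assms(2,3) by blast
  define k where "k = g j"
  define \<eta> :: real where "\<eta> = 8 / real k"
  define \<epsilon> :: real where "\<epsilon> = 1 / (32 * real j)"
  define m where "m = m0 \<epsilon> (1 / 8)"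
  define b where "b s = nat \<lfloor>\<eta> * real s\<rfloor>" for s
  have \<eta>: "0 \<le> \<eta>" "\<eta> \<le> 1"
    using j(3) by (simp_all add: \<eta>_def k_def)
  interpret hard_family B j k "2 * m + 1"
    using B_bij j(1,2) by unfold_locales (simp_all add: k_def)
  show False
  proof (rule no_learner_against_symmetric_adversary[of m "\<alpha> * \<eta> + \<epsilon>" adv A b])
    show "2 * m < 2 * m + 1" "symmetric_adversary adv"
      by (simp_all add: assms(5))
    show "\<alpha> * \<eta> + \<epsilon> < mid_mass / 4"
      unfolding mid_mass_def using j(4) by (simp add: \<eta>_def \<epsilon>_def k_def)
  next
    fix D assume D: "D \<in> transversals (2 * m + 1)"
    let ?V = "\<lambda>S. return_pmf (adversary_view adv b (D, S))"
    have "Adv ?V \<and> has_budget ?V \<eta>"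
      using admissible[OF \<eta>, of "rare D" "\<lambda>S. rare (twin D S)"] by (simp add: adversary_view_def b_def)
    moreover have "hard_dist D \<in> C_class B g"
      using hard_dist_in_C_class[of g, OF k_def[symmetric] D] .
    ultimately have "1 - 1 / 8 \<le> measure_pmf.prob (sample_pmf (hard_dist D) m \<bind> ?V)
        {T. tv_dist (A T) (hard_dist D) \<le> \<alpha> * \<eta> + \<epsilon>}"
      using j(1) by (intro learner) (simp_all add: \<epsilon>_def m_def)
    then show "7 / 8 \<le> measure_pmf.prob (sample_pmf (hard_dist D) m)
        {S. tv_dist (A (adversary_view adv b (D, S))) (hard_dist D) \<le> \<alpha> * \<eta> + \<epsilon>}"
      by (simp add: map_pmf_def[symmetric] vimage_def)
  next
    fix D assume "D \<in> transversals (2 * m + 1)"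
    then show "measure_pmf.prob (sample_pmf (hard_dist D) m) {S. b m < count S (rare D)} \<le> 1 / 8"
      using prob_rare_count_gt_budget by (simp add: b_def \<eta>_def)
  qed
qed

definition add_adversary :: "pt \<Rightarrow> pt \<Rightarrow> nat \<Rightarrow> pt multiset \<Rightarrow> pt multiset" where
  "add_adversary a b t S =
     S + replicate_mset (min (count S a) t) b + replicate_mset (t - count S a) (0, 0)"

(* The copies of a are deleted first; the remaining deletions depend only on the other points. *)
definition sub_adversary :: "pt \<Rightarrow> nat \<Rightarrow> pt multiset \<Rightarrow> pt multiset" where
  "sub_adversary a t S =
     mset (drop t (replicate (count S a) a @ (SOME xs. mset xs = filter_mset (\<lambda>z. z \<noteq> a) S)))"

lemma size_add_adversary: "size (add_adversary a b t S) = size S + t"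
  by (simp add: add_adversary_def)

lemma symmetric_add_adversary: "symmetric_adversary add_adversary"
  by (simp add: symmetric_adversary_def add_adversary_def ac_simps)

lemma mset_sub_adversary_list:
  "mset (replicate (count S a) a @ (SOME xs. mset xs = filter_mset (\<lambda>z. z \<noteq> a) S)) = S"
proof -
  have "mset (SOME xs. mset xs = filter_mset (\<lambda>z. z \<noteq> a) S) = filter_mset (\<lambda>z. z \<noteq> a) S"
    by (rule someI_ex) (rule ex_mset)
  then show ?thesis
    using filter_mset_neq_plus_replicate[of a S] by (simp add: add.commute)
qed

lemma size_sub_adversary: "size (sub_adversary a t S) = size S - t"
  using arg_cong[OF mset_sub_adversary_list[of S a], of size]
  by (simp add: sub_adversary_def del: mset_append)

lemma sub_adversary_subset: "sub_adversary a t S \<subseteq># S"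
  unfolding sub_adversary_def
  by (metis append_take_drop_id mset_append mset_subset_eq_add_right mset_sub_adversary_list)

lemma sub_adversary_replicate:
  assumes "count F a = 0" "c \<le> t"
  shows "sub_adversary a t (F + replicate_mset c a) = mset (drop (t - c) (SOME xs. mset xs = F))"
proof -
  have "filter_mset (\<lambda>z. z \<noteq> a) (F + replicate_mset c a) = F"
    using assms(1) by (auto simp: multiset_eq_iff)
  moreover have "drop t (replicate c a @ xs) = drop (t - c) xs" for xs :: "pt list"
    using assms(2) by simp
  ultimately show ?thesis
    using assms(1) by (simp add: sub_adversary_def)
qed

lemma symmetric_sub_adversary: "symmetric_adversary (\<lambda>a b. sub_adversary a)"
  by (simp add: symmetric_adversary_def sub_adversary_replicate)

lemma add_adversary_admissible:
  assumes "0 \<le> \<eta>"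
  shows "additive_adv (\<lambda>S. return_pmf (add_adversary a (h S) (nat \<lfloor>\<eta> * real (size S)\<rfloor>) S)) \<and>
    has_budget (\<lambda>S. return_pmf (add_adversary a (h S) (nat \<lfloor>\<eta> * real (size S)\<rfloor>) S)) \<eta>"
  using assms by (auto simp: additive_adv_def add_adversary_def size_add_adversary
      intro!: has_budget_return_pmf[where f = "\<lambda>s. s + nat \<lfloor>\<eta> * real s\<rfloor>"])

lemma sub_adversary_admissible:
  assumes "0 \<le> \<eta>" "\<eta> \<le> 1"
  shows "subtractive_adv (\<lambda>S. return_pmf (sub_adversary a (nat \<lfloor>\<eta> * real (size S)\<rfloor>) S)) \<and>
    has_budget (\<lambda>S. return_pmf (sub_adversary a (nat \<lfloor>\<eta> * real (size S)\<rfloor>) S)) \<eta>"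
proof -
  have "nat \<lfloor>\<eta> * real s\<rfloor> \<le> s" for s
    using assms mult_right_mono[OF assms(2), of "real s"] by linarith
  then show ?thesis
    using assms by (auto simp: subtractive_adv_def sub_adversary_subset size_sub_adversary of_nat_diff
        intro!: has_budget_return_pmf[where f = "\<lambda>s. s - nat \<lfloor>\<eta> * real s\<rfloor>"])
qed

theorem corollary6p3:
  fixes B :: "nat \<Rightarrow> nat set" and g :: "nat \<Rightarrow> nat" and \<alpha> :: real
  assumes "bij_betw B UNIV {A :: nat set. finite A}"
    and "superlinear g"
    and "\<alpha> > 1"
  shows "\<not> adaptively_additively_robustly_learnable (C_class B g) \<alpha> \<and>
         \<not> adaptively_subtractively_robustly_learnable (C_class B g) \<alpha>"
proof
  show "\<not> adaptively_additively_robustly_learnable (C_class B g) \<alpha>"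
    by (rule not_adaptive_robustly_learnable[OF assms _ symmetric_add_adversary])
      (rule add_adversary_admissible)
  show "\<not> adaptively_subtractively_robustly_learnable (C_class B g) \<alpha>"
    by (rule not_adaptive_robustly_learnable[OF assms _ symmetric_sub_adversary])
      (rule sub_adversary_admissible)
qed

end
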